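(* If $g,h,gh\in\mathcal{G}$ ($g$ and $h$ are composable) then $$\mathrm{rot}(\Delta_g) = \Delta_g: H_g \to H_g \diamond H_g,$$ $$\mathrm{rot}(m_{g,h}) = \bar S_{\bar g} \circ m_{h,\bar h \bar g} \circ (\mathrm{id}_g \diamond S_{gh}) : H_h \diamond H_{gh} \to H_g.$$
   Context: Let $\mathcal{G}$ be a groupoid and $\mathcal{H}(\mathcal{G})$ the free braided monoidal category (product $\diamond$, unit $\mathbf{1}$, braiding $\gamma$) generated by a Hopf $\mathcal{G}$-algebra $H=\{H_g\}_{g\in\mathcal{G}}$ (comultiplications $\Delta_g:H_g\to H_g\diamond H_g$, counits $\epsilon_g$, multiplications $m_{g,h}:H_g\diamond H_h\to H_{gh}$, units $\eta_i$, antipodes $S_g:H_g\to H_{\bar g}$ with inverses $\bar S_g$) with a left cointegral $l=\{l_i:H_{1_i}\to\mathbf{1}\}$ and a right integral $L=\{L_g:\mathbf{1}\to H_g\}$ such that $l_i\circ L_{1_i}=\mathrm{id}_{\mathbf{1}}=l_i\circ S_{1_i}\circ L_{1_i}$. $\mathcal{H}(\mathcal{G})$ is autonomous with $H_g^\ast=H_g$, coform $\Lambda_g=\Delta_g\circ L_g:\mathbf{1}\to H_g\diamond H_g$ and form $\lambda_g=l_i\circ m_{g,\bar g}\circ(\mathrm{id}_g\diamond S_g):H_g\diamond H_g\to\mathbf{1}$ for $g\in\mathcal{G}(i,j)$. Writing $\mathrm{Mor}(A,B)$ for the morphisms $A\to B$ in $\mathcal{H}(\mathcal{G})$, the rotation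 map $\mathrm{rot}:\mathrm{Mor}(H_g\diamond A,B\diamond H_h)\to\mathrm{Mor}(A\diamond H_h,H_g\diamond B)$ is defined by $$\mathrm{rot}(F)=(\mathrm{id}_{H_g\diamond B}\diamond\lambda_h)\circ(\mathrm{id}_g\diamond F\diamond\mathrm{id}_h)\circ(\Lambda_g\diamond\mathrm{id}_{A\diamond H_h}).$$ Here $\Delta_g$ is regarded as a morphism $H_g\diamond\mathbf{1}\to H_g\diamond H_g$ and $m_{g,h}$ as a morphism $H_g\diamond H_h\to\mathbf{1}\diamond H_{gh}$. *)

theory Defs
  imports Main
begin

section \<open>Strict braided monoidal categories (all elements of type 'm are arrows)\<close>

record ('o, 'm) bmc =
  Dom :: "'m \<Rightarrow> 'o"
  Cod :: "'m \<Rightarrow> 'o"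
  Cmp :: "'m \<Rightarrow> 'm \<Rightarrow> 'm"   (* Cmp f g = f \<circ> g, meaningful when Dom f = Cod g *)
  Idm :: "'o \<Rightarrow> 'm"
  Tob :: "'o \<Rightarrow> 'o \<Rightarrow> 'o"
  Tm  :: "'m \<Rightarrow> 'm \<Rightarrow> 'm"
  Uo  :: "'o"
  Br  :: "'o \<Rightarrow> 'o \<Rightarrow> 'm"

definition strict_braided_cat :: "('o, 'm, 'z) bmc_scheme \<Rightarrow> bool" where
  "strict_braided_cat C \<longleftrightarrow>
     (\<forall>f g. Dom C f = Cod C g \<longrightarrow> Dom C (Cmp C f g) = Dom C g \<and> Cod C (Cmp C f g) = Cod C f)
   \<and> (\<forall>f g k. Dom C f = Cod C g \<longrightarrow> Dom C g = Cod C k \<longrightarrow>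
        Cmp C (Cmp C f g) k = Cmp C f (Cmp C g k))
   \<and> (\<forall>A. Dom C (Idm C A) = A \<and> Cod C (Idm C A) = A)
   \<and> (\<forall>f. Cmp C f (Idm C (Dom C f)) = f \<and> Cmp C (Idm C (Cod C f)) f = f)
   \<and> (\<forall>A B D. Tob C (Tob C A B) D = Tob C A (Tob C B D))
   \<and> (\<forall>A. Tob C (Uo C) A = A \<and> Tob C A (Uo C) = A)
   \<and> (\<forall>f g. Dom C (Tm C f g) = Tob C (Dom C f) (Dom C g) \<and> Cod C (Tm C f g) = Tob C (Cod C f) (Cod C g))
   \<and> (\<forall>f g k. Tm C (Tm C f g) k = Tm C f (Tm C g k))
   \<and> (\<forall>f. Tm C (Idm C (Uo C)) f = f \<and> Tm C f (Idm C (Uo C)) = f)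
   \<and> (\<forall>A B. Tm C (Idm C A) (Idm C B) = Idm C (Tob C A B))
   \<and> (\<forall>f g f' g'. Dom C f = Cod C f' \<longrightarrow> Dom C g = Cod C g' \<longrightarrow>
        Cmp C (Tm C f g) (Tm C f' g') = Tm C (Cmp C f f') (Cmp C g g'))
   \<and> (\<forall>A B. Dom C (Br C A B) = Tob C A B \<and> Cod C (Br C A B) = Tob C B A)
   \<and> (\<forall>f g. Cmp C (Br C (Cod C f) (Cod C g)) (Tm C f g) = Cmp C (Tm C g f) (Br C (Dom C f) (Dom C g)))
   \<and> (\<forall>A B. \<exists>k. Dom C k = Tob C B A \<and> Cod C k = Tob C A B \<and>
        Cmp C k (Br C A B) = Idm C (Tob C A B) \<and> Cmp C (Br C A B) k = Idm C (Tob C B A))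
   \<and> (\<forall>A B D. Br C A (Tob C B D) = Cmp C (Tm C (Idm C B) (Br C A D)) (Tm C (Br C A B) (Idm C D)))
   \<and> (\<forall>A B D. Br C (Tob C A B) D = Cmp C (Tm C (Br C A D) (Idm C B)) (Tm C (Idm C A) (Br C B D)))"

section \<open>Groupoids (g \<in> G(i,j) means src g = i, tgt g = j; gh defined iff tgt g = src h)\<close>

record ('g, 'i) gpd =
  src  :: "'g \<Rightarrow> 'i"
  tgt  :: "'g \<Rightarrow> 'i"
  gm   :: "'g \<Rightarrow> 'g \<Rightarrow> 'g"
  gid  :: "'i \<Rightarrow> 'g"
  ginv :: "'g \<Rightarrow> 'g"

definition groupoid :: "('g, 'i, 'z) gpd_scheme \<Rightarrow> bool" where
  "groupoid G \<longleftrightarrow>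
     (\<forall>g h. tgt G g = src G h \<longrightarrow> src G (gm G g h) = src G g \<and> tgt G (gm G g h) = tgt G h)
   \<and> (\<forall>g h k. tgt G g = src G h \<longrightarrow> tgt G h = src G k \<longrightarrow>
        gm G (gm G g h) k = gm G g (gm G h k))
   \<and> (\<forall>i. src G (gid G i) = i \<and> tgt G (gid G i) = i)
   \<and> (\<forall>g. gm G (gid G (src G g)) g = g \<and> gm G g (gid G (tgt G g)) = g)
   \<and> (\<forall>g. src G (ginv G g) = tgt G g \<and> tgt G (ginv G g) = src G g)
   \<and> (\<forall>g. gm G g (ginv G g) = gid G (src G g) \<and> gm G (ginv G g) g = gid G (tgt G g))"

record ('o, 'm, 'g, 'i) hopfG =
  HH  :: "'g \<Rightarrow> 'o"
  Dl  :: "'g \<Rightarrow> 'm"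
  ep  :: "'g \<Rightarrow> 'm"
  mu  :: "'g \<Rightarrow> 'g \<Rightarrow> 'm"
  eta :: "'i \<Rightarrow> 'm"
  Sa  :: "'g \<Rightarrow> 'm"
  Sb  :: "'g \<Rightarrow> 'm"           (* \<bar>S_g : H_g \<rightarrow> H_{\<bar>g}, inverse of S_{\<bar>g} *)
  lc  :: "'i \<Rightarrow> 'm"
  Li  :: "'g \<Rightarrow> 'm"

definition hopf_G_algebra_int ::
  "('o, 'm, 'z1) bmc_scheme \<Rightarrow> ('g, 'i, 'z2) gpd_scheme \<Rightarrow> ('o, 'm, 'g, 'i, 'z3) hopfG_scheme \<Rightarrow> bool" where
  "hopf_G_algebra_int C G X \<longleftrightarrow>
     strict_braided_cat C \<and> groupoid G
   \<comment> \<open>typing\<close>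
   \<and> (\<forall>g. Dom C (Dl X g) = HH X g \<and> Cod C (Dl X g) = Tob C (HH X g) (HH X g))
   \<and> (\<forall>g. Dom C (ep X g) = HH X g \<and> Cod C (ep X g) = Uo C)
   \<and> (\<forall>g h. tgt G g = src G h \<longrightarrow>
        Dom C (mu X g h) = Tob C (HH X g) (HH X h) \<and> Cod C (mu X g h) = HH X (gm G g h))
   \<and> (\<forall>i. Dom C (eta X i) = Uo C \<and> Cod C (eta X i) = HH X (gid G i))
   \<and> (\<forall>g. Dom C (Sa X g) = HH X g \<and> Cod C (Sa X g) = HH X (ginv G g))
   \<and> (\<forall>g. Dom C (Sb X g) = HH X g \<and> Cod C (Sb X g) = HH X (ginv G g))
   \<and> (\<forall>i. Dom C (lc X i) = HH X (gid G i) \<and> Cod C (lc X i) = Uo C)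
   \<and> (\<forall>g. Dom C (Li X g) = Uo C \<and> Cod C (Li X g) = HH X g)
   \<comment> \<open>coalgebra H_g\<close>
   \<and> (\<forall>g. Cmp C (Tm C (Dl X g) (Idm C (HH X g))) (Dl X g)
          = Cmp C (Tm C (Idm C (HH X g)) (Dl X g)) (Dl X g))
   \<and> (\<forall>g. Cmp C (Tm C (ep X g) (Idm C (HH X g))) (Dl X g) = Idm C (HH X g)
        \<and> Cmp C (Tm C (Idm C (HH X g)) (ep X g)) (Dl X g) = Idm C (HH X g))
   \<comment> \<open>G-graded algebra\<close>
   \<and> (\<forall>g h k. tgt G g = src G h \<longrightarrow> tgt G h = src G k \<longrightarrow>
        Cmp C (mu X (gm G g h) k) (Tm C (mu X g h) (Idm C (HH X k)))
        = Cmp C (mu X g (gm G h k)) (Tm C (Idm C (HH X g)) (mu X h k)))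
   \<and> (\<forall>g. Cmp C (mu X (gid G (src G g)) g) (Tm C (eta X (src G g)) (Idm C (HH X g))) = Idm C (HH X g)
        \<and> Cmp C (mu X g (gid G (tgt G g))) (Tm C (Idm C (HH X g)) (eta X (tgt G g))) = Idm C (HH X g))
   \<comment> \<open>bialgebra compatibility\<close>
   \<and> (\<forall>g h. tgt G g = src G h \<longrightarrow>
        Cmp C (Dl X (gm G g h)) (mu X g h)
        = Cmp C (Tm C (mu X g h) (mu X g h))
            (Cmp C (Tm C (Idm C (HH X g)) (Tm C (Br C (HH X g) (HH X h)) (Idm C (HH X h))))
               (Tm C (Dl X g) (Dl X h))))
   \<and> (\<forall>g h. tgt G g = src G h \<longrightarrow>
        Cmp C (ep X (gm G g h)) (mu X g h) = Tm C (ep X g) (ep X h))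
   \<and> (\<forall>i. Cmp C (Dl X (gid G i)) (eta X i) = Tm C (eta X i) (eta X i))
   \<and> (\<forall>i. Cmp C (ep X (gid G i)) (eta X i) = Idm C (Uo C))
   \<comment> \<open>antipode, and its inverse\<close>
   \<and> (\<forall>g. Cmp C (mu X g (ginv G g)) (Cmp C (Tm C (Idm C (HH X g)) (Sa X g)) (Dl X g))
          = Cmp C (eta X (src G g)) (ep X g))
   \<and> (\<forall>g. Cmp C (mu X (ginv G g) g) (Cmp C (Tm C (Sa X g) (Idm C (HH X g))) (Dl X g))
          = Cmp C (eta X (tgt G g)) (ep X g))
   \<and> (\<forall>g. Cmp C (Sa X (ginv G g)) (Sb X g) = Idm C (HH X g)
        \<and> Cmp C (Sb X g) (Sa X (ginv G g)) = Idm C (HH X (ginv G g)))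
   \<comment> \<open>left cointegral: (id \<diamond> l_i) \<Delta>_{1_i} = \<eta>_i l_i\<close>
   \<and> (\<forall>i. Cmp C (Tm C (Idm C (HH X (gid G i))) (lc X i)) (Dl X (gid G i)) = Cmp C (eta X i) (lc X i))
   \<comment> \<open>right integral: m_{g,h} (L_g \<diamond> id_h) = L_{gh} \<epsilon>_h\<close>
   \<and> (\<forall>g h. tgt G g = src G h \<longrightarrow>
        Cmp C (mu X g h) (Tm C (Li X g) (Idm C (HH X h))) = Cmp C (Li X (gm G g h)) (ep X h))
   \<comment> \<open>normalisation\<close>
   \<and> (\<forall>i. Cmp C (lc X i) (Li X (gid G i)) = Idm C (Uo C)
        \<and> Cmp C (lc X i) (Cmp C (Sa X (gid G i)) (Li X (gid G i))) = Idm C (Uo C))"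

definition coformL :: "('o, 'm, 'z1) bmc_scheme \<Rightarrow> ('o, 'm, 'g, 'i, 'z3) hopfG_scheme \<Rightarrow> 'g \<Rightarrow> 'm" where
  "coformL C X g = Cmp C (Dl X g) (Li X g)"

definition formL :: "('o, 'm, 'z1) bmc_scheme \<Rightarrow> ('g, 'i, 'z2) gpd_scheme \<Rightarrow> ('o, 'm, 'g, 'i, 'z3) hopfG_scheme \<Rightarrow> 'g \<Rightarrow> 'm" where
  "formL C G X g = Cmp C (lc X (src G g)) (Cmp C (mu X g (ginv G g)) (Tm C (Idm C (HH X g)) (Sa X g)))"

text \<open>rot : Mor(H_g \<diamond> A, B \<diamond> H_h) \<rightarrow> Mor(A \<diamond> H_h, H_g \<diamond> B)\<close>
definition rot :: "('o, 'm, 'z1) bmc_scheme \<Rightarrow> ('g, 'i, 'z2) gpd_scheme \<Rightarrow> ('o, 'm, 'g, 'i, 'z3) hopfG_scheme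
                    \<Rightarrow> 'g \<Rightarrow> 'g \<Rightarrow> 'o \<Rightarrow> 'o \<Rightarrow> 'm \<Rightarrow> 'm" where
  "rot C G X g h A B F =
     Cmp C (Tm C (Idm C (Tob C (HH X g) B)) (formL C G X h))
       (Cmp C (Tm C (Tm C (Idm C (HH X g)) F) (Idm C (HH X h)))
          (Tm C (coformL C X g) (Idm C (Tob C A (HH X h)))))"

end

theory Submission
  imports Defs
begin

(* Everything rests on the zigzag identity (id \<diamond> \<lambda>_g)(\<Lambda>_g \<diamond> id) = id_g. In Sweedler
   notation, with L = L_{1_i} and x in H_g: the right integral and the counit give
   L_g \<otimes> x = L x_(1) \<otimes> x_(2), so the bialgebra axiom turns the left side into
   L_(1) x_(1) l(L_(2) x_(2) S(x_(3))) = L_(1) x_(1) l(L_(2)) \<epsilon>(x_(2)) = L_(1) x l(L_(2)) = x,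
   using the antipode, the left cointegral and l L = 1.
   Then rot(\<Delta>_g) = \<Delta>_g follows from coassociativity of \<Lambda>_g. For rot(m_{g,h}), associativity
   moves m_{g,h} into the form \<lambda>_{gh}, which leaves (id \<diamond> l m_{g,g\<inverse>})(\<Lambda>_g \<diamond> id) composed
   with m_{h,(gh)\<inverse>}(id \<diamond> S_{gh}); by the zigzag identity that first map is a left inverse
   of S_g, hence equal to its inverse Sb_{g\<inverse>}. *)

locale strict_braided_category =
  fixes C :: "('o, 'm, 'z) bmc_scheme"
  assumes strict_braided: "strict_braided_cat C"
begin

abbreviation cat_comp (infixr "\<cdot>" 55) where "f \<cdot> g \<equiv> Cmp C f g"
abbreviation tensor (infixr "\<diamond>" 60) where "f \<diamond> g \<equiv> Tm C f g"
abbreviation tensor_ob (infixr "\<otimes>" 65) where "A \<otimes> B \<equiv> Tob C A B"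
abbreviation "I \<equiv> Idm C"
abbreviation "U \<equiv> Uo C"

lemma dom_comp [simp]: "Dom C f = Cod C g \<Longrightarrow> Dom C (f \<cdot> g) = Dom C g"
  and cod_comp [simp]: "Dom C f = Cod C g \<Longrightarrow> Cod C (f \<cdot> g) = Cod C f"
  and comp_assoc [simp]:
    "Dom C f = Cod C g \<Longrightarrow> Dom C g = Cod C k \<Longrightarrow> (f \<cdot> g) \<cdot> k = f \<cdot> (g \<cdot> k)"
  and dom_Idm [simp]: "Dom C (I A) = A"
  and cod_Idm [simp]: "Cod C (I A) = A"
  and comp_Idm_right [simp]: "A = Dom C f \<Longrightarrow> f \<cdot> I A = f"
  and comp_Idm_left [simp]: "A = Cod C f \<Longrightarrow> I A \<cdot> f = f"
  and Tob_assoc [simp]: "(A \<otimes> B) \<otimes> D = A \<otimes> (B \<otimes> D)"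
  and Tob_unit [simp]: "U \<otimes> A = A" "A \<otimes> U = A"
  and dom_Tm [simp]: "Dom C (f \<diamond> g) = Dom C f \<otimes> Dom C g"
  and cod_Tm [simp]: "Cod C (f \<diamond> g) = Cod C f \<otimes> Cod C g"
  and Tm_assoc [simp]: "(f \<diamond> g) \<diamond> k = f \<diamond> (g \<diamond> k)"
  and Tm_unit [simp]: "I U \<diamond> f = f" "f \<diamond> I U = f"
  and Tm_Idm [simp]: "I A \<diamond> I B = I (A \<otimes> B)"
  and interchange: "Dom C f = Cod C f' \<Longrightarrow> Dom C g = Cod C g' \<Longrightarrow>
                      (f \<diamond> g) \<cdot> (f' \<diamond> g') = (f \<cdot> f') \<diamond> (g \<cdot> g')"
  and dom_Br [simp]: "Dom C (Br C A B) = A \<otimes> B"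
  and cod_Br [simp]: "Cod C (Br C A B) = B \<otimes> A"
  and Br_natural: "Br C (Cod C f) (Cod C g) \<cdot> (f \<diamond> g) = (g \<diamond> f) \<cdot> Br C (Dom C f) (Dom C g)"
  and Br_invertible: "\<exists>k. Dom C k = B \<otimes> A \<and> Cod C k = A \<otimes> B \<and> k \<cdot> Br C A B = I (A \<otimes> B)"
  and Br_hexagon_right: "Br C (A \<otimes> B) D = (Br C A D \<diamond> I B) \<cdot> (I A \<diamond> Br C B D)"
  using strict_braided unfolding strict_braided_cat_def by (elim conjE; meson)+

lemma Tm_Idm_Idm [simp]: "I A \<diamond> I B \<diamond> f = I (A \<otimes> B) \<diamond> f"
  by (metis Tm_assoc Tm_Idm)

lemma Br_unit_left [simp]: "Br C U A = I A"
proof -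
  obtain k where k: "Dom C k = A" "Cod C k = A" "k \<cdot> Br C U A = I A"
    using Br_invertible[where A = U and B = A] by auto
  have idem: "Br C U A \<cdot> Br C U A = Br C U A"
    using Br_hexagon_right[of U U A] by simp
  have "I A = k \<cdot> (Br C U A \<cdot> Br C U A)"
    using idem k by simp
  also have "\<dots> = Br C U A"
    using k by (simp flip: comp_assoc)
  finally show ?thesis by simp
qed

lemma Tm_factor_left: "f \<diamond> k = (f \<diamond> I (Cod C k)) \<cdot> (I (Dom C f) \<diamond> k)"
  by (simp add: interchange)

lemma Tm_factor_right: "f \<diamond> k = (I (Cod C f) \<diamond> k) \<cdot> (f \<diamond> I (Dom C k))"
  by (simp add: interchange)

lemma slide:
  "(f \<diamond> I (Cod C k)) \<cdot> (I (Dom C f) \<diamond> k) = (I (Cod C f) \<diamond> k) \<cdot> (f \<diamond> I (Dom C k))"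
  by (simp flip: Tm_factor_left Tm_factor_right)

lemma Tm_comp_right: "Dom C x = Cod C k \<Longrightarrow> f \<diamond> (x \<cdot> k) = (I (Cod C f) \<diamond> x) \<cdot> (f \<diamond> k)"
  by (simp add: interchange)

lemma Tm_comp_left: "Dom C x = Cod C y \<Longrightarrow> (x \<cdot> y) \<diamond> k = (x \<diamond> I (Cod C k)) \<cdot> (y \<diamond> k)"
  by (simp add: interchange)

lemma comp_reduce:
  "x \<cdot> y = z \<Longrightarrow> Dom C x = Cod C y \<Longrightarrow> Dom C y = Cod C k \<Longrightarrow> x \<cdot> (y \<cdot> k) = z \<cdot> k"
  by (metis comp_assoc)

end

locale groupoid_structure =
  fixes G :: "('g, 'i, 'z) gpd_scheme"
  assumes groupoid: "groupoid G"
begin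

lemma src_gm [simp]: "tgt G g = src G h \<Longrightarrow> src G (gm G g h) = src G g"
  and tgt_gm [simp]: "tgt G g = src G h \<Longrightarrow> tgt G (gm G g h) = tgt G h"
  and gm_assoc: "tgt G g = src G h \<Longrightarrow> tgt G h = src G k \<Longrightarrow> gm G (gm G g h) k = gm G g (gm G h k)"
  and src_gid [simp]: "src G (gid G i) = i"
  and tgt_gid [simp]: "tgt G (gid G i) = i"
  and gm_gid_left [simp]: "src G g = i \<Longrightarrow> gm G (gid G i) g = g"
  and gm_gid_right [simp]: "tgt G g = i \<Longrightarrow> gm G g (gid G i) = g"
  and src_ginv [simp]: "src G (ginv G g) = tgt G g"
  and tgt_ginv [simp]: "tgt G (ginv G g) = src G g"
  and gm_ginv_right [simp]: "gm G g (ginv G g) = gid G (src G g)"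
  and gm_ginv_left [simp]: "gm G (ginv G g) g = gid G (tgt G g)"
  using groupoid unfolding groupoid_def by blast+

lemma gm_ginv_cancel_left [simp]: "src G k = src G h \<Longrightarrow> gm G h (gm G (ginv G h) k) = k"
  by (simp flip: gm_assoc)

lemma ginv_unique:
  assumes "tgt G g = src G h" and "gm G g h = gid G (src G g)"
  shows "h = ginv G g"
proof -
  have "h = gm G (ginv G g) (gm G g h)"
    using assms(1) by (simp flip: gm_assoc)
  also have "\<dots> = ginv G g"
    using assms(2) by simp
  finally show ?thesis .
qed

lemma ginv_ginv [simp]: "ginv G (ginv G g) = g"
  by (rule ginv_unique[symmetric]) simp_all

lemma ginv_gid [simp]: "ginv G (gid G i) = gid G i"
  by (rule ginv_unique[symmetric]) simp_all

lemma ginv_gm: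
  assumes "tgt G g = src G h"
  shows "ginv G (gm G g h) = gm G (ginv G h) (ginv G g)"
proof (rule ginv_unique[symmetric])
  show "gm G (gm G g h) (gm G (ginv G h) (ginv G g)) = gid G (src G (gm G g h))"
    using assms by (simp add: gm_assoc)
qed (use assms in simp)

lemma gm_ginv_gm [simp]: "tgt G g = src G h \<Longrightarrow> gm G h (ginv G (gm G g h)) = ginv G g"
  by (simp add: ginv_gm)

end

locale hopf_G_algebra =
  fixes C :: "('o, 'm, 'z1) bmc_scheme" and G :: "('g, 'i, 'z2) gpd_scheme"
    and X :: "('o, 'm, 'g, 'i, 'z3) hopfG_scheme"
  assumes hopf: "hopf_G_algebra_int C G X"

sublocale hopf_G_algebra \<subseteq> strict_braided_category C
  using hopf by unfold_locales (simp add: hopf_G_algebra_int_def)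

sublocale hopf_G_algebra \<subseteq> groupoid_structure G
  using hopf by unfold_locales (simp add: hopf_G_algebra_int_def)

context hopf_G_algebra
begin

lemma dom_Dl [simp]: "Dom C (Dl X g) = HH X g"
  and cod_Dl [simp]: "Cod C (Dl X g) = HH X g \<otimes> HH X g"
  and dom_ep [simp]: "Dom C (ep X g) = HH X g"
  and cod_ep [simp]: "Cod C (ep X g) = U"
  and dom_mu [simp]: "tgt G g = src G h \<Longrightarrow> Dom C (mu X g h) = HH X g \<otimes> HH X h"
  and cod_mu [simp]: "tgt G g = src G h \<Longrightarrow> Cod C (mu X g h) = HH X (gm G g h)"
  and dom_eta [simp]: "Dom C (eta X i) = U"
  and cod_eta [simp]: "Cod C (eta X i) = HH X (gid G i)"
  and dom_Sa [simp]: "Dom C (Sa X g) = HH X g"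
  and cod_Sa [simp]: "Cod C (Sa X g) = HH X (ginv G g)"
  and dom_Sb [simp]: "Dom C (Sb X g) = HH X g"
  and cod_Sb [simp]: "Cod C (Sb X g) = HH X (ginv G g)"
  and dom_lc [simp]: "Dom C (lc X i) = HH X (gid G i)"
  and cod_lc [simp]: "Cod C (lc X i) = U"
  and dom_Li [simp]: "Dom C (Li X g) = U"
  and cod_Li [simp]: "Cod C (Li X g) = HH X g"
  using hopf unfolding hopf_G_algebra_int_def by (elim conjE; meson)+

lemma Dl_coassoc: "(Dl X g \<diamond> I (HH X g)) \<cdot> Dl X g = (I (HH X g) \<diamond> Dl X g) \<cdot> Dl X g"
  and counit_left: "(ep X g \<diamond> I (HH X g)) \<cdot> Dl X g = I (HH X g)"
  and counit_right: "(I (HH X g) \<diamond> ep X g) \<cdot> Dl X g = I (HH X g)"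
  and mu_assoc: "tgt G g = src G h \<Longrightarrow> tgt G h = src G k \<Longrightarrow>
     mu X (gm G g h) k \<cdot> (mu X g h \<diamond> I (HH X k)) = mu X g (gm G h k) \<cdot> (I (HH X g) \<diamond> mu X h k)"
  and unit_left: "src G g = i \<Longrightarrow> mu X (gid G i) g \<cdot> (eta X i \<diamond> I (HH X g)) = I (HH X g)"
  and unit_right: "tgt G g = i \<Longrightarrow> mu X g (gid G i) \<cdot> (I (HH X g) \<diamond> eta X i) = I (HH X g)"
  and Dl_mu: "tgt G g = src G h \<Longrightarrow> Dl X (gm G g h) \<cdot> mu X g h
     = (mu X g h \<diamond> mu X g h) \<cdot> (I (HH X g) \<diamond> Br C (HH X g) (HH X h) \<diamond> I (HH X h))
         \<cdot> (Dl X g \<diamond> Dl X h)"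
  and antipode_right: "mu X g (ginv G g) \<cdot> (I (HH X g) \<diamond> Sa X g) \<cdot> Dl X g = eta X (src G g) \<cdot> ep X g"
  and Sa_ginv_Sb: "Sa X (ginv G g) \<cdot> Sb X g = I (HH X g)"
  and left_cointegral: "(I (HH X (gid G i)) \<diamond> lc X i) \<cdot> Dl X (gid G i) = eta X i \<cdot> lc X i"
  and right_integral: "tgt G g = src G h \<Longrightarrow>
     mu X g h \<cdot> (Li X g \<diamond> I (HH X h)) = Li X (gm G g h) \<cdot> ep X h"
  and lc_Li_normalised: "lc X i \<cdot> Li X (gid G i) = I U"
  using hopf unfolding hopf_G_algebra_int_def by (elim conjE; meson)+

abbreviation mu_Sa :: "'g \<Rightarrow> 'g \<Rightarrow> 'm"
  where "mu_Sa h k \<equiv> mu X h (ginv G k) \<cdot> (I (HH X h) \<diamond> Sa X k)"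

lemma dom_coformL [simp]: "Dom C (coformL C X g) = U"
  and cod_coformL [simp]: "Cod C (coformL C X g) = HH X g \<otimes> HH X g"
  and dom_formL [simp]: "Dom C (formL C G X g) = HH X g \<otimes> HH X g"
  and cod_formL [simp]: "Cod C (formL C G X g) = U"
  by (simp_all add: coformL_def formL_def)

lemma formL_comp_mu:
  assumes gh: "tgt G g = src G h"
  defines "k \<equiv> gm G g h"
  shows "formL C G X k \<cdot> (mu X g h \<diamond> I (HH X k))
    = lc X (src G g) \<cdot> mu X g (ginv G g) \<cdot> (I (HH X g) \<diamond> mu_Sa h k)"
proof -
  have assoc: "mu X k (ginv G k) \<cdot> (mu X g h \<diamond> I (HH X (ginv G k)))
      = mu X g (ginv G g) \<cdot> (I (HH X g) \<diamond> mu X h (ginv G k))"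
    using gh mu_assoc[of g h "ginv G k"] by (simp add: k_def)
  have "formL C G X k \<cdot> (mu X g h \<diamond> I (HH X k))
      = lc X (src G g) \<cdot> mu X k (ginv G k) \<cdot> (I (HH X k) \<diamond> Sa X k) \<cdot> (mu X g h \<diamond> I (HH X k))"
    using gh by (simp add: formL_def k_def)
  also have "\<dots> = lc X (src G g) \<cdot> mu X k (ginv G k) \<cdot> (mu X g h \<diamond> I (HH X (ginv G k)))
                    \<cdot> (I (HH X g \<otimes> HH X h) \<diamond> Sa X k)"
    using slide[of "mu X g h" "Sa X k"] gh by (simp add: k_def)
  also have "\<dots> = lc X (src G g) \<cdot> mu X g (ginv G g) \<cdot> (I (HH X g) \<diamond> mu X h (ginv G k))
                    \<cdot> (I (HH X g \<otimes> HH X h) \<diamond> Sa X k)"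
    using gh by (subst comp_reduce[OF assoc]) (simp_all add: k_def)
  also have "\<dots> = lc X (src G g) \<cdot> mu X g (ginv G g) \<cdot> (I (HH X g) \<diamond> mu_Sa h k)"
    using gh by (simp add: k_def Tm_comp_right)
  finally show ?thesis .
qed

lemma Li_tensor_Idm:
  fixes g :: 'g
  defines "e \<equiv> gid G (src G g)"
  shows "Li X g \<diamond> I (HH X g) = (mu X e g \<diamond> I (HH X g)) \<cdot> (Li X e \<diamond> Dl X g)"
proof -
  have "Li X g \<diamond> I (HH X g) = (Li X g \<diamond> I (HH X g)) \<cdot> (ep X g \<diamond> I (HH X g)) \<cdot> Dl X g"
    by (simp add: counit_left)
  also have "\<dots> = ((mu X e g \<cdot> (Li X e \<diamond> I (HH X g))) \<diamond> I (HH X g)) \<cdot> Dl X g"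
    using right_integral[of e g] by (simp add: e_def Tm_comp_left)
  also have "\<dots> = (mu X e g \<diamond> I (HH X g)) \<cdot> (Li X e \<diamond> Dl X g)"
    using Tm_factor_left[of "Li X e" "Dl X g"] by (simp add: e_def Tm_comp_left)
  finally show ?thesis .
qed

lemma coformL_tensor_Idm:
  fixes g :: 'g
  defines "e \<equiv> gid G (src G g)"
  shows "coformL C X g \<diamond> I (HH X g)
    = (mu X e g \<diamond> mu X e g \<diamond> I (HH X g))
      \<cdot> (I (HH X e) \<diamond> Br C (HH X e) (HH X g) \<diamond> I (HH X g \<otimes> HH X g))
      \<cdot> (coformL C X e \<diamond> ((I (HH X g) \<diamond> Dl X g) \<cdot> Dl X g))"
proof -
  have "coformL C X g \<diamond> I (HH X g) = (Dl X g \<diamond> I (HH X g)) \<cdot> (Li X g \<diamond> I (HH X g))"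
    by (simp add: coformL_def interchange)
  also have "\<dots> = ((Dl X g \<cdot> mu X e g) \<diamond> I (HH X g)) \<cdot> (Li X e \<diamond> Dl X g)"
    by (simp add: Li_tensor_Idm e_def Tm_comp_left)
  also have "\<dots> = (mu X e g \<diamond> mu X e g \<diamond> I (HH X g))
      \<cdot> (I (HH X e) \<diamond> Br C (HH X e) (HH X g) \<diamond> I (HH X g \<otimes> HH X g))
      \<cdot> (Dl X e \<diamond> Dl X g \<diamond> I (HH X g)) \<cdot> (Li X e \<diamond> Dl X g)"
    using Dl_mu[of e g] by (simp add: e_def Tm_comp_left)
  also have "(Dl X e \<diamond> Dl X g \<diamond> I (HH X g)) \<cdot> (Li X e \<diamond> Dl X g)
      = coformL C X e \<diamond> ((I (HH X g) \<diamond> Dl X g) \<cdot> Dl X g)"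
    by (simp add: coformL_def interchange flip: Dl_coassoc)
  finally show ?thesis .
qed

lemma formL_comp_mu_Dl:
  fixes g :: 'g
  defines "i \<equiv> src G g"
  defines "e \<equiv> gid G i"
  shows "formL C G X g \<cdot> (mu X e g \<diamond> I (HH X g)) \<cdot> (I (HH X e) \<diamond> Dl X g) = lc X i \<diamond> ep X g"
proof -
  have form: "formL C G X g \<cdot> (mu X e g \<diamond> I (HH X g))
      = lc X i \<cdot> mu X e e \<cdot> (I (HH X e) \<diamond> mu_Sa g g)"
    using formL_comp_mu[of e g] by (simp add: e_def i_def)
  have "formL C G X g \<cdot> (mu X e g \<diamond> I (HH X g)) \<cdot> (I (HH X e) \<diamond> Dl X g)
      = lc X i \<cdot> mu X e e \<cdot> (I (HH X e) \<diamond> (mu_Sa g g \<cdot> Dl X g))"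
    by (subst comp_reduce[OF form]) (simp_all add: e_def i_def interchange)
  also have "\<dots> = lc X i \<cdot> mu X e e \<cdot> (I (HH X e) \<diamond> eta X i) \<cdot> (I (HH X e) \<diamond> ep X g)"
    by (simp add: e_def i_def antipode_right Tm_comp_right)
  also have "\<dots> = lc X i \<diamond> ep X g"
    using Tm_factor_left[of "lc X i" "ep X g"] by (simp add: e_def comp_reduce[OF unit_right])
  finally show ?thesis .
qed

lemma lc_coformL: "(I (HH X (gid G i)) \<diamond> lc X i) \<cdot> coformL C X (gid G i) = eta X i"
  by (simp add: coformL_def comp_reduce[OF left_cointegral] lc_Li_normalised)

lemma coformL_contract_lc:
  fixes g :: 'g
  defines "i \<equiv> src G g"
  defines "e \<equiv> gid G i"
  shows "(mu X e g \<diamond> lc X i \<diamond> ep X g) \<cdot> (I (HH X e) \<diamond> Br C (HH X e) (HH X g) \<diamond> I (HH X g))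
           \<cdot> (coformL C X e \<diamond> Dl X g) = I (HH X g)"
proof -
  let ?B = "Br C (HH X e) (HH X g)"
  have counit: "(mu X e g \<diamond> lc X i \<diamond> ep X g) \<cdot> (I (HH X e) \<diamond> ?B \<diamond> I (HH X g))
      = (mu X e g \<diamond> lc X i) \<cdot> (I (HH X e) \<diamond> ?B) \<cdot> (I (HH X e \<otimes> HH X e \<otimes> HH X g) \<diamond> ep X g)"
    using Tm_factor_left[of "mu X e g \<diamond> lc X i" "ep X g"] slide[of "I (HH X e) \<diamond> ?B" "ep X g"]
    by (simp add: e_def i_def)
  have braid: "(mu X e g \<diamond> lc X i) \<cdot> (I (HH X e) \<diamond> ?B) = mu X e g \<cdot> (I (HH X e) \<diamond> lc X i \<diamond> I (HH X g))"
  proof -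
    have "(I (HH X g) \<diamond> lc X i) \<cdot> ?B = lc X i \<diamond> I (HH X g)"
      using Br_natural[of "lc X i" "I (HH X g)"] by (simp add: e_def)
    then show ?thesis
      using Tm_factor_left[of "mu X e g" "lc X i"] Tm_comp_right[of "I (HH X g) \<diamond> lc X i" ?B "I (HH X e)"]
      by (simp add: e_def i_def)
  qed
  have "(mu X e g \<diamond> lc X i \<diamond> ep X g) \<cdot> (I (HH X e) \<diamond> ?B \<diamond> I (HH X g)) \<cdot> (coformL C X e \<diamond> Dl X g)
      = (mu X e g \<diamond> lc X i) \<cdot> (I (HH X e) \<diamond> ?B)
          \<cdot> (I (HH X e \<otimes> HH X e \<otimes> HH X g) \<diamond> ep X g) \<cdot> (coformL C X e \<diamond> Dl X g)"
    by (subst comp_reduce[OF counit]) (simp_all add: e_def i_def)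
  also have "\<dots> = (mu X e g \<diamond> lc X i) \<cdot> (I (HH X e) \<diamond> ?B) \<cdot> (coformL C X e \<diamond> I (HH X g))"
    using interchange[of "I (HH X e \<otimes> HH X e)" "coformL C X e" "I (HH X g) \<diamond> ep X g" "Dl X g"]
    by (simp add: counit_right)
  also have "\<dots> = mu X e g \<cdot> (I (HH X e) \<diamond> lc X i \<diamond> I (HH X g)) \<cdot> (coformL C X e \<diamond> I (HH X g))"
    by (subst comp_reduce[OF braid]) (simp_all add: e_def i_def)
  also have "\<dots> = I (HH X g)"
    using lc_coformL[of i] unit_left[of g i] by (simp add: e_def i_def interchange flip: Tm_assoc)
  finally show ?thesis .
qed

lemma formL_coformL_zigzag: "(I (HH X g) \<diamond> formL C G X g) \<cdot> (coformL C X g \<diamond> I (HH X g)) = I (HH X g)"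
proof -
  let ?i = "src G g"
  let ?e = "gid G ?i"
  let ?m = "mu X ?e g"
  let ?B = "Br C (HH X ?e) (HH X g)"
  let ?\<Lambda> = "coformL C X ?e"
  let ?lm = "formL C G X g \<cdot> (?m \<diamond> I (HH X g))"
  have mult: "(I (HH X g) \<diamond> formL C G X g) \<cdot> (?m \<diamond> ?m \<diamond> I (HH X g)) = ?m \<diamond> ?lm"
    by (simp add: interchange)
  have comult: "(I (HH X ?e) \<diamond> ?B \<diamond> I (HH X g \<otimes> HH X g)) \<cdot> (?\<Lambda> \<diamond> ((I (HH X g) \<diamond> Dl X g) \<cdot> Dl X g))
      = (I (HH X ?e \<otimes> HH X g \<otimes> HH X ?e) \<diamond> Dl X g) \<cdot> (I (HH X ?e) \<diamond> ?B \<diamond> I (HH X g))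
          \<cdot> (?\<Lambda> \<diamond> Dl X g)"
    using slide[of "I (HH X ?e) \<diamond> ?B" "Dl X g"]
    by (simp add: Tm_comp_right[of "I (HH X g) \<diamond> Dl X g"] flip: comp_assoc)
  have absorb: "(?m \<diamond> ?lm) \<cdot> (I (HH X ?e \<otimes> HH X g \<otimes> HH X ?e) \<diamond> Dl X g) = ?m \<diamond> lc X ?i \<diamond> ep X g"
    using interchange[of ?m "I (HH X ?e \<otimes> HH X g)" ?lm "I (HH X ?e) \<diamond> Dl X g"]
    by (simp add: formL_comp_mu_Dl)
  have "(I (HH X g) \<diamond> formL C G X g) \<cdot> (coformL C X g \<diamond> I (HH X g))
      = (?m \<diamond> ?lm) \<cdot> (I (HH X ?e \<otimes> HH X g \<otimes> HH X ?e) \<diamond> Dl X g)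
          \<cdot> (I (HH X ?e) \<diamond> ?B \<diamond> I (HH X g)) \<cdot> (?\<Lambda> \<diamond> Dl X g)"
    by (simp only: coformL_tensor_Idm comult) (subst comp_reduce[OF mult]; simp)
  also have "\<dots> = (?m \<diamond> lc X ?i \<diamond> ep X g) \<cdot> (I (HH X ?e) \<diamond> ?B \<diamond> I (HH X g)) \<cdot> (?\<Lambda> \<diamond> Dl X g)"
    by (subst comp_reduce[OF absorb]) simp_all
  also have "\<dots> = I (HH X g)"
    by (rule coformL_contract_lc)
  finally show ?thesis .
qed

lemma coformL_coassoc: "(I (HH X g) \<diamond> Dl X g) \<cdot> coformL C X g = (Dl X g \<diamond> I (HH X g)) \<cdot> coformL C X g"
  unfolding coformL_def by (simp flip: comp_assoc Dl_coassoc)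

lemma rot_Dl: "rot C G X g g U (HH X g) (Dl X g) = Dl X g"
proof -
  let ?gg = "HH X g \<otimes> HH X g"
  have slide_Dl: "(I ?gg \<diamond> formL C G X g) \<cdot> (Dl X g \<diamond> I ?gg) = Dl X g \<cdot> (I (HH X g) \<diamond> formL C G X g)"
    using slide[of "Dl X g" "formL C G X g"] by simp
  have "rot C G X g g U (HH X g) (Dl X g)
      = (I ?gg \<diamond> formL C G X g) \<cdot> (((I (HH X g) \<diamond> Dl X g) \<cdot> coformL C X g) \<diamond> I (HH X g))"
    unfolding rot_def by (simp add: interchange flip: Tm_assoc)
  also have "\<dots> = (I ?gg \<diamond> formL C G X g) \<cdot> (Dl X g \<diamond> I ?gg) \<cdot> (coformL C X g \<diamond> I (HH X g))"
    by (simp add: coformL_coassoc Tm_comp_left)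
  also have "\<dots> = Dl X g \<cdot> (I (HH X g) \<diamond> formL C G X g) \<cdot> (coformL C X g \<diamond> I (HH X g))"
    by (subst comp_reduce[OF slide_Dl]) simp_all
  also have "\<dots> = Dl X g"
    by (simp add: formL_coformL_zigzag)
  finally show ?thesis .
qed

lemma Sb_ginv_coformL:
  "Sb X (ginv G g)
     = (I (HH X g) \<diamond> (lc X (src G g) \<cdot> mu X g (ginv G g))) \<cdot> (coformL C X g \<diamond> I (HH X (ginv G g)))"
    (is "_ = ?T")
proof -
  let ?A = "lc X (src G g) \<cdot> mu X g (ginv G g)"
  have "?T \<cdot> Sa X g = (I (HH X g) \<diamond> ?A) \<cdot> (I (HH X g \<otimes> HH X g) \<diamond> Sa X g) \<cdot> (coformL C X g \<diamond> I (HH X g))"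
    using slide[of "coformL C X g" "Sa X g"] Tm_factor_left[of "coformL C X g" "Sa X g"] by simp
  also have "\<dots> = I (HH X g)"
    using formL_coformL_zigzag[of g] Tm_comp_right[of ?A "I (HH X g) \<diamond> Sa X g" "I (HH X g)"]
    by (simp add: formL_def)
  finally have left_inverse: "?T \<cdot> Sa X g = I (HH X g)" .
  have "?T = ?T \<cdot> Sa X g \<cdot> Sb X (ginv G g)"
    using Sa_ginv_Sb[of "ginv G g"] by simp
  then show ?thesis
    using left_inverse by (simp flip: comp_assoc)
qed

lemma rot_mu:
  assumes gh: "tgt G g = src G h"
  shows "rot C G X g (gm G g h) (HH X h) U (mu X g h) = Sb X (ginv G g) \<cdot> mu_Sa h (gm G g h)"
proof -
  let ?k = "gm G g h"
  let ?A = "lc X (src G g) \<cdot> mu X g (ginv G g)"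
  have "rot C G X g ?k (HH X h) U (mu X g h)
      = (I (HH X g) \<diamond> (formL C G X ?k \<cdot> (mu X g h \<diamond> I (HH X ?k))))
          \<cdot> (coformL C X g \<diamond> I (HH X h \<otimes> HH X ?k))"
    unfolding rot_def using gh by (simp add: Tm_comp_right)
  also have "\<dots> = (I (HH X g) \<diamond> ?A) \<cdot> (I (HH X g \<otimes> HH X g) \<diamond> mu_Sa h ?k)
                    \<cdot> (coformL C X g \<diamond> I (HH X h \<otimes> HH X ?k))"
    using gh by (simp add: formL_comp_mu Tm_comp_right)
  also have "\<dots> = (I (HH X g) \<diamond> ?A) \<cdot> (coformL C X g \<diamond> I (HH X (ginv G g))) \<cdot> mu_Sa h ?k"
    using gh slide[of "coformL C X g" "mu_Sa h ?k"] by simp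
  also have "\<dots> = Sb X (ginv G g) \<cdot> mu_Sa h ?k"
    using gh by (simp add: Sb_ginv_coformL flip: comp_assoc)
  finally show ?thesis .
qed

end

theorem lemma5p7:
  fixes C :: "('o, 'm) bmc" and G :: "('g, 'i) gpd" and X :: "('o, 'm, 'g, 'i) hopfG"
    and g h :: 'g
  assumes "hopf_G_algebra_int C G X"
    and "tgt G g = src G h"
  shows "rot C G X g g (Uo C) (HH X g) (Dl X g) = Dl X g
       \<and> rot C G X g (gm G g h) (HH X h) (Uo C) (mu X g h)
         = Cmp C (Sb X (ginv G g))
             (Cmp C (mu X h (gm G (ginv G h) (ginv G g)))
                (Tm C (Idm C (HH X h)) (Sa X (gm G g h))))"
proof -
  interpret hopf_G_algebra C G X
    using assms(1) by (rule hopf_G_algebra.intro)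
  show ?thesis
    using rot_Dl[of g] rot_mu[OF assms(2)] assms(2) by (simp add: ginv_gm)
qed

end
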